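(* For every pair $N_1,N_2$ of phylogenetic networks over the same set $S$ of taxa, $$m(N_1,N_2)=\tfrac12|\Upsilon(N_1)\bigtriangleup\Upsilon(N_2)|.$$
   Context: A phylogenetic network on a finite set $S$ is a finite rooted directed acyclic graph whose leaves are bijectively labeled by $S$. Nodes $u,v$ (possibly in different networks) are equivalent, $u\equiv v$, if both are leaves with the same label, or for some $k\ge1$ both have exactly $k$ children which can be ordered $u_1,\dots,u_k$ and $v_1,\dots,v_k$ with $u_i\equiv v_i$ for all $i$. For a node $v$ of a network, $\kappa(v)$ is the number of nodes in that network equivalent to $v$. Nakhleh's measure: let $U(N_1),U(N_2)$ be maximal sets of pairwise non-equivalent nodes of $N_1,N_2$; for $v_1\in U(N_1)$, $\delta(v_1)=\kappa(v_1)$ if no node of $U(N_2)$ is equivalent to $v_1$, and $\delta(v_1)=\max\{0,\kappa(v_1)-\kappa(v_1')\}$ if $v_1'\in U(N_2)$ is equivalent to $v_1$; $\delta(v_2)$ for $v_2\in U(N_2)$ is defined symmetrically; and $m(N_1,N_2)=\frac12\big(\sum_{v_1\in U(N_1)}\delta(v_1)+\sum_{v_2\in U(N_2)}\delta(v_2)\big)$. The nested label $\ell(v)$ is defined by induction on height (largest length of a path to a leaf): $\ell(v)=\{i\}$ for the leaf labeled $i$, and otherwise $\ell(v)$ is the multiset of nested labels of the children of $v$. $\Upsilon(N)$ is the multiset of nested labels of all nodes of $N$ (multiplicity = number of nodes with that nested label); $\bigtriangleup$ is multiset symmetric difference (multiplicity $|M_1(x)-M_2(x)|$) and $|\cdot|$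 is the sum of multiplicities. *)

theory Defs
  imports Complex_Main "HOL-Library.Multiset"
begin

text \<open>A phylogenetic network: finite node set, arc relation, root, and a labelling
  of nodes (only its values on leaves matter).\<close>
record ('v, 'l) network =
  nodes :: "'v set"
  arcs  :: "('v \<times> 'v) set"
  root  :: 'v
  lbl   :: "'v \<Rightarrow> 'l"

definition children :: "('v, 'l) network \<Rightarrow> 'v \<Rightarrow> 'v set" where
  "children N u = {w. (u, w) \<in> arcs N}"

definition leaves :: "('v, 'l) network \<Rightarrow> 'v set" where
  "leaves N = {v \<in> nodes N. children N v = {}}"

definition phylo_net :: "'l set \<Rightarrow> ('v, 'l) network \<Rightarrow> bool" where
  "phylo_net S N \<longleftrightarrow>
     finite (nodes N) \<and>
     arcs N \<subseteq> nodes N \<times> nodes N \<and>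
     acyclic (arcs N) \<and>
     root N \<in> nodes N \<and>
     (\<forall>v \<in> nodes N. (root N, v) \<in> (arcs N)\<^sup>*) \<and>
     bij_betw (lbl N) (leaves N) S"

inductive node_equiv :: "('a, 'l) network \<Rightarrow> ('b, 'l) network \<Rightarrow> 'a \<Rightarrow> 'b \<Rightarrow> bool"
  for N1 N2 where
  leaf: "u \<in> leaves N1 \<Longrightarrow> v \<in> leaves N2 \<Longrightarrow> lbl N1 u = lbl N2 v \<Longrightarrow> node_equiv N1 N2 u v"
| inner: "u \<in> nodes N1 \<Longrightarrow> v \<in> nodes N2 \<Longrightarrow> children N1 u \<noteq> {} \<Longrightarrow>
          bij_betw f (children N1 u) (children N2 v) \<Longrightarrow>
          (\<forall>c \<in> children N1 u. node_equiv N1 N2 c (f c)) \<Longrightarrow> node_equiv N1 N2 u v"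

definition kappa :: "('v, 'l) network \<Rightarrow> 'v \<Rightarrow> nat" where
  "kappa N v = card {u \<in> nodes N. node_equiv N N u v}"

definition max_noneq_set :: "('v, 'l) network \<Rightarrow> 'v set \<Rightarrow> bool" where
  "max_noneq_set N U \<longleftrightarrow>
     U \<subseteq> nodes N \<and>
     (\<forall>u \<in> U. \<forall>w \<in> U. u \<noteq> w \<longrightarrow> \<not> node_equiv N N u w) \<and>
     (\<forall>x \<in> nodes N - U. \<exists>u \<in> U. node_equiv N N x u \<or> node_equiv N N u x)"

definition delta :: "('a, 'l) network \<Rightarrow> ('b, 'l) network \<Rightarrow> 'b set \<Rightarrow> 'a \<Rightarrow> nat" where
  "delta N1 N2 U2 v1 =
     (if \<exists>v2 \<in> U2. node_equiv N1 N2 v1 v2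
      then kappa N1 v1 - kappa N2 (SOME v2. v2 \<in> U2 \<and> node_equiv N1 N2 v1 v2)
      else kappa N1 v1)"

definition nakhleh :: "('a, 'l) network \<Rightarrow> ('b, 'l) network \<Rightarrow> 'a set \<Rightarrow> 'b set \<Rightarrow> real" where
  "nakhleh N1 N2 U1 U2 =
     (real (\<Sum>v1\<in>U1. delta N1 N2 U2 v1) + real (\<Sum>v2\<in>U2. delta N2 N1 U1 v2)) / 2"

datatype 'l nlabel = NLeaf 'l | NNode "'l nlabel multiset"

inductive has_nlabel :: "('v, 'l) network \<Rightarrow> 'v \<Rightarrow> 'l nlabel \<Rightarrow> bool" for N where
  leaf: "v \<in> leaves N \<Longrightarrow> has_nlabel N v (NLeaf (lbl N v))"
| inner: "v \<in> nodes N \<Longrightarrow> children N v \<noteq> {} \<Longrightarrow>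
          (\<forall>c \<in> children N v. has_nlabel N c (g c)) \<Longrightarrow>
          has_nlabel N v (NNode (image_mset g (mset_set (children N v))))"

definition nested_label :: "('v, 'l) network \<Rightarrow> 'v \<Rightarrow> 'l nlabel" where
  "nested_label N v = (THE L. has_nlabel N v L)"

definition Upsilon :: "('v, 'l) network \<Rightarrow> 'l nlabel multiset" where
  "Upsilon N = image_mset (nested_label N) (mset_set (nodes N))"

definition msym_diff :: "'a multiset \<Rightarrow> 'a multiset \<Rightarrow> 'a multiset" where
  "msym_diff M1 M2 = (M1 - M2) + (M2 - M1)"

end

theory Submission
  imports Defs
begin

text \<open>Two nodes are equivalent exactly when they carry the same nested label: both relations
  are characterised by the same recursion over the acyclic arc relation, and an equality of the
  multisets of the children's labels yields a label-preserving bijection between the children.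
  Consequently \<open>\<kappa>(v)\<close> is the multiplicity of \<open>\<ell>(v)\<close> in \<open>\<Upsilon>(N)\<close>, and a maximal set of
  pairwise non-equivalent nodes picks exactly one node for each nested label occurring in
  \<open>\<Upsilon>(N)\<close>. Summing \<open>\<delta>\<close> over such a set therefore adds up the truncated differences
  \<open>\<Upsilon>(N\<^sub>1)(x) - \<Upsilon>(N\<^sub>2)(x)\<close> over all labels \<open>x\<close>, which is \<open>|\<Upsilon>(N\<^sub>1) - \<Upsilon>(N\<^sub>2)|\<close>;
  together with the symmetric sum this gives the symmetric difference.\<close>

definition finite_dag :: "('v, 'l) network \<Rightarrow> bool" where
  "finite_dag N \<longleftrightarrow> finite (nodes N) \<and> arcs N \<subseteq> nodes N \<times> nodes N \<and> acyclic (arcs N)"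

lemma phylo_net_finite_dag: "phylo_net S N \<Longrightarrow> finite_dag N"
  by (simp add: phylo_net_def finite_dag_def)

lemma children_subset_nodes: "finite_dag N \<Longrightarrow> children N v \<subseteq> nodes N"
  by (auto simp: finite_dag_def children_def)

lemma child_in_nodes: "finite_dag N \<Longrightarrow> c \<in> children N v \<Longrightarrow> c \<in> nodes N"
  using children_subset_nodes[of N v] by blast

lemma finite_children: "finite_dag N \<Longrightarrow> finite (children N v)"
  by (rule finite_subset[OF children_subset_nodes]) (simp_all add: finite_dag_def)

lemma wf_converse_arcs: "finite_dag N \<Longrightarrow> wf ((arcs N)\<inverse>)"
  unfolding finite_dag_def
  by (metis finite_SigmaI finite_acyclic_wf_converse finite_subset)

lemma has_nlabel_unique: "has_nlabel N v L1 \<Longrightarrow> has_nlabel N v L2 \<Longrightarrow> L1 = L2"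
proof (induction arbitrary: L2 rule: has_nlabel.induct)
  case (leaf v)
  from leaf.prems show ?case
    by cases (use leaf.hyps in \<open>simp_all add: leaves_def\<close>)
next
  case (inner v g)
  from inner.prems show ?case
  proof cases
    case leaf
    then show ?thesis using inner.hyps(2) by (simp add: leaves_def)
  next
    case (inner g')
    have "image_mset g (mset_set (children N v)) = image_mset g' (mset_set (children N v))"
    proof (rule image_mset_cong)
      fix c assume "c \<in># mset_set (children N v)"
      then have "c \<in> children N v"
        by (metis elem_mset_set empty_iff mset_set.infinite set_mset_empty)
      then show "g c = g' c" using \<open>\<forall>c\<in>children N v. has_nlabel N c (g' c)\<close> inner.IH by blast
    qed
    then show ?thesis using inner(1) by simp
  qed
qed

lemma has_nlabel_exists:
  assumes N: "finite_dag N" and v: "v \<in> nodes N"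
  shows "\<exists>L. has_nlabel N v L"
  using wf_converse_arcs[OF N] v
proof (induction v rule: wf_induct_rule)
  case (less v)
  show ?case
  proof (cases "children N v = {}")
    case True
    then have "v \<in> leaves N" using less.prems by (simp add: leaves_def)
    then show ?thesis by (blast intro: has_nlabel.leaf)
  next
    case False
    have "\<forall>c\<in>children N v. \<exists>L. has_nlabel N c L"
      using less.IH child_in_nodes[OF N] by (auto simp: children_def)
    then obtain g where "\<forall>c\<in>children N v. has_nlabel N c (g c)" by metis
    then show ?thesis using has_nlabel.inner[OF less.prems False] by blast
  qed
qed

lemma has_nlabel_nested_label:
  assumes "finite_dag N" "v \<in> nodes N"
  shows "has_nlabel N v (nested_label N v)"
  unfolding nested_label_def
  using has_nlabel_exists[OF assms] has_nlabel_unique by (metis theI)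

lemma nested_label_leaf:
  assumes N: "finite_dag N" and v: "v \<in> leaves N"
  shows "nested_label N v = NLeaf (lbl N v)"
proof -
  have "v \<in> nodes N" using v by (simp add: leaves_def)
  then show ?thesis
    using has_nlabel_unique[OF has_nlabel_nested_label[OF N] has_nlabel.leaf[OF v]] by simp
qed

lemma nested_label_inner:
  assumes N: "finite_dag N" and v: "v \<in> nodes N" and inner: "children N v \<noteq> {}"
  shows "nested_label N v = NNode (image_mset (nested_label N) (mset_set (children N v)))"
proof -
  have "\<forall>c\<in>children N v. has_nlabel N c (nested_label N c)"
    using has_nlabel_nested_label[OF N] child_in_nodes[OF N] by blast
  from has_nlabel.inner[OF v inner this]
  show ?thesis by (rule has_nlabel_unique[OF has_nlabel_nested_label[OF N v]])
qed

lemma image_mset_mset_set_eq_imp_bij_betw: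
  assumes "finite A" "finite B" "image_mset g (mset_set A) = image_mset h (mset_set B)"
  shows "\<exists>f. bij_betw f A B \<and> (\<forall>a\<in>A. h (f a) = g a)"
  using assms
proof (induction A arbitrary: B rule: finite_induct)
  case empty
  then show ?case by (auto simp: mset_set_empty_iff bij_betw_def)
next
  case (insert a A)
  have "g a \<in># image_mset g (mset_set (insert a A))"
    using insert.hyps by simp
  then have "g a \<in># image_mset h (mset_set B)"
    using insert.prems(2) by simp
  then obtain b where b: "b \<in> B" "h b = g a" using insert.prems(1) by auto
  have "mset_set B = add_mset b (mset_set (B - {b}))"
    using b(1) insert.prems(1) by (simp add: mset_set.remove)
  then have "add_mset (g a) (image_mset g (mset_set A))
      = add_mset (g a) (image_mset h (mset_set (B - {b})))"
    using insert.prems(2) insert.hyps b(2) by simp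
  then obtain f where f: "bij_betw f A (B - {b})" "\<forall>x\<in>A. h (f x) = g x"
    using insert.IH[of "B - {b}"] insert.prems(1) by auto
  have "bij_betw (f(a := b)) A (B - {b}) \<longleftrightarrow> bij_betw f A (B - {b})"
    using insert.hyps(2) by (intro bij_betw_cong) auto
  with f(1) have "bij_betw (f(a := b)) (A \<union> {a}) ((B - {b}) \<union> {b})"
    using notIn_Un_bij_betw3[of a A "f(a := b)" "B - {b}"] insert.hyps(2) by simp
  moreover have "A \<union> {a} = insert a A" "(B - {b}) \<union> {b} = B" using b(1) by auto
  moreover have "\<forall>x\<in>insert a A. h ((f(a := b)) x) = g x"
    using f(2) b(2) insert.hyps(2) by auto
  ultimately show ?case by metis
qed

lemma node_equiv_imp_nested_label_eq:
  assumes N1: "finite_dag N1" and N2: "finite_dag N2"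
  shows "node_equiv N1 N2 u v \<Longrightarrow> nested_label N1 u = nested_label N2 v"
proof (induction rule: node_equiv.induct)
  case (leaf u v)
  then show ?case by (simp add: nested_label_leaf[OF N1] nested_label_leaf[OF N2])
next
  case (inner u v f)
  have inner_v: "children N2 v \<noteq> {}" using inner.hyps(3,4) bij_betw_empty2 by metis
  have "mset_set (children N2 v) = image_mset f (mset_set (children N1 u))"
    using inner.hyps(4) by (simp add: bij_betw_def image_mset_mset_set)
  then have "image_mset (nested_label N2) (mset_set (children N2 v))
      = image_mset (nested_label N2 \<circ> f) (mset_set (children N1 u))"
    by (simp add: multiset.map_comp)
  also have "\<dots> = image_mset (nested_label N1) (mset_set (children N1 u))"
  proof (rule image_mset_cong)
    fix c assume "c \<in># mset_set (children N1 u)"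
    then have "c \<in> children N1 u"
      by (metis elem_mset_set empty_iff mset_set.infinite set_mset_empty)
    then show "(nested_label N2 \<circ> f) c = nested_label N1 c" using inner.IH by auto
  qed
  finally show ?case
    using nested_label_inner[OF N1 inner.hyps(1,3)] nested_label_inner[OF N2 inner.hyps(2) inner_v]
    by simp
qed

lemma nested_label_eq_imp_node_equiv:
  assumes N1: "finite_dag N1" and N2: "finite_dag N2" and u: "u \<in> nodes N1"
  shows "v \<in> nodes N2 \<Longrightarrow> nested_label N1 u = nested_label N2 v \<Longrightarrow> node_equiv N1 N2 u v"
  using wf_converse_arcs[OF N1] u
proof (induction u arbitrary: v rule: wf_induct_rule)
  case (less u)
  from less.prems have u: "u \<in> nodes N1" and v: "v \<in> nodes N2"
    and eq: "nested_label N1 u = nested_label N2 v" by simp_all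
  have "children N1 u = {} \<longleftrightarrow> children N2 v = {}"
    using eq u v
    by (cases "children N1 u = {}"; cases "children N2 v = {}")
      (simp_all add: nested_label_leaf[OF N1] nested_label_leaf[OF N2] leaves_def
        nested_label_inner[OF N1 u] nested_label_inner[OF N2 v])
  then consider "children N1 u = {}" "children N2 v = {}"
    | "children N1 u \<noteq> {}" "children N2 v \<noteq> {}"
    by blast
  then show ?case
  proof cases
    case 1
    then have "u \<in> leaves N1" "v \<in> leaves N2" using u v by (simp_all add: leaves_def)
    then show ?thesis
      using eq by (simp add: node_equiv.leaf nested_label_leaf[OF N1] nested_label_leaf[OF N2])
  next
    case 2
    have "image_mset (nested_label N1) (mset_set (children N1 u))
        = image_mset (nested_label N2) (mset_set (children N2 v))"
      using eq 2 by (simp add: nested_label_inner[OF N1 u] nested_label_inner[OF N2 v])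
    then obtain f where f: "bij_betw f (children N1 u) (children N2 v)"
      "\<forall>c\<in>children N1 u. nested_label N2 (f c) = nested_label N1 c"
      using image_mset_mset_set_eq_imp_bij_betw[OF finite_children[OF N1] finite_children[OF N2]]
      by blast
    have "\<forall>c\<in>children N1 u. node_equiv N1 N2 c (f c)"
    proof
      fix c assume c: "c \<in> children N1 u"
      have "f c \<in> nodes N2"
        using f(1) c child_in_nodes[OF N2] by (metis bij_betwE)
      then show "node_equiv N1 N2 c (f c)"
        using less.IH c f(2) child_in_nodes[OF N1 c] by (simp add: children_def)
    qed
    then show ?thesis using node_equiv.inner[OF u v 2(1) f(1)] by blast
  qed
qed

lemma node_equiv_iff_nested_label_eq:
  assumes "finite_dag N1" "finite_dag N2" "u \<in> nodes N1" "v \<in> nodes N2"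
  shows "node_equiv N1 N2 u v \<longleftrightarrow> nested_label N1 u = nested_label N2 v"
  using node_equiv_imp_nested_label_eq[OF assms(1,2)] nested_label_eq_imp_node_equiv[OF assms]
  by blast

lemma count_Upsilon:
  assumes "finite_dag N"
  shows "count (Upsilon N) L = card {u \<in> nodes N. nested_label N u = L}"
proof -
  have "finite (nodes N)" using assms by (simp add: finite_dag_def)
  then have "count (Upsilon N) L = card (nested_label N -` {L} \<inter> nodes N)"
    unfolding Upsilon_def count_image_mset by simp
  also have "nested_label N -` {L} \<inter> nodes N = {u \<in> nodes N. nested_label N u = L}" by auto
  finally show ?thesis .
qed

lemma kappa_eq_count_Upsilon:
  assumes N: "finite_dag N" and v: "v \<in> nodes N"
  shows "kappa N v = count (Upsilon N) (nested_label N v)"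
proof -
  have "{u \<in> nodes N. node_equiv N N u v} = {u \<in> nodes N. nested_label N u = nested_label N v}"
    using node_equiv_iff_nested_label_eq[OF N N _ v] by blast
  then show ?thesis by (simp add: kappa_def count_Upsilon[OF N])
qed

lemma max_noneq_set_representatives:
  assumes N: "finite_dag N" and U: "max_noneq_set N U"
  shows "inj_on (nested_label N) U" "set_mset (Upsilon N) = nested_label N ` U"
proof -
  have U_nodes: "U \<subseteq> nodes N" using U by (simp add: max_noneq_set_def)
  have fin: "finite (nodes N)" using N by (simp add: finite_dag_def)
  show "inj_on (nested_label N) U"
    using U U_nodes node_equiv_iff_nested_label_eq[OF N N]
    unfolding max_noneq_set_def inj_on_def by blast
  have "nested_label N x \<in> nested_label N ` U" if x: "x \<in> nodes N" for x
  proof (cases "x \<in> U")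
    case False
    then obtain u where "u \<in> U" "node_equiv N N x u \<or> node_equiv N N u x"
      using U x unfolding max_noneq_set_def by blast
    then show ?thesis using node_equiv_imp_nested_label_eq[OF N N] by (metis image_eqI)
  qed simp
  then show "set_mset (Upsilon N) = nested_label N ` U"
    using U_nodes fin by (auto simp: Upsilon_def)
qed

lemma sum_count_diff_over_representatives:
  assumes "finite U" "inj_on f U" "set_mset M \<subseteq> f ` U"
  shows "(\<Sum>u\<in>U. count M (f u) - count M' (f u)) = size (M - M')"
proof -
  have "(\<Sum>u\<in>U. count M (f u) - count M' (f u)) = (\<Sum>x\<in>f ` U. count (M - M') x)"
    using sum.reindex[OF assms(2), of "count (M - M')"] by simp
  also have "\<dots> = (\<Sum>x\<in>set_mset (M - M'). count (M - M') x)"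
    using assms(1,3) by (intro sum.mono_neutral_right) (auto dest: in_diffD simp: not_in_iff)
  also have "\<dots> = size (M - M')" by (simp add: size_multiset_overloaded_eq)
  finally show ?thesis .
qed

lemma delta_eq_count_diff:
  assumes N1: "finite_dag N1" and N2: "finite_dag N2"
    and U2: "max_noneq_set N2 U2" and v: "v \<in> nodes N1"
  shows "delta N1 N2 U2 v
    = count (Upsilon N1) (nested_label N1 v) - count (Upsilon N2) (nested_label N1 v)"
proof (cases "\<exists>w\<in>U2. node_equiv N1 N2 v w")
  case True
  define w where "w = (SOME w. w \<in> U2 \<and> node_equiv N1 N2 v w)"
  have "w \<in> U2" "node_equiv N1 N2 v w"
    using someI_ex[of "\<lambda>w. w \<in> U2 \<and> node_equiv N1 N2 v w"] True unfolding w_def by blast+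
  moreover have "w \<in> nodes N2" using \<open>w \<in> U2\<close> U2 by (auto simp: max_noneq_set_def)
  ultimately show ?thesis
    using True node_equiv_imp_nested_label_eq[OF N1 N2]
    by (simp add: delta_def w_def[symmetric] kappa_eq_count_Upsilon[OF N1 v]
        kappa_eq_count_Upsilon[OF N2])
next
  case False
  have "nested_label N1 v \<notin> nested_label N2 ` U2"
    using False U2 node_equiv_iff_nested_label_eq[OF N1 N2 v]
    by (auto simp: max_noneq_set_def)
  then have "count (Upsilon N2) (nested_label N1 v) = 0"
    using max_noneq_set_representatives(2)[OF N2 U2] by (simp add: not_in_iff[symmetric])
  then show ?thesis using False by (simp add: delta_def kappa_eq_count_Upsilon[OF N1 v])
qed

lemma sum_delta_eq_size_diff:
  assumes N1: "finite_dag N1" and N2: "finite_dag N2"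
    and U1: "max_noneq_set N1 U1" and U2: "max_noneq_set N2 U2"
  shows "(\<Sum>v\<in>U1. delta N1 N2 U2 v) = size (Upsilon N1 - Upsilon N2)"
proof -
  have U1_nodes: "U1 \<subseteq> nodes N1" using U1 by (simp add: max_noneq_set_def)
  then have "finite U1" using N1 finite_subset by (auto simp: finite_dag_def)
  note representatives = max_noneq_set_representatives[OF N1 U1]
  have "(\<Sum>v\<in>U1. delta N1 N2 U2 v) = (\<Sum>v\<in>U1.
      count (Upsilon N1) (nested_label N1 v) - count (Upsilon N2) (nested_label N1 v))"
    using U1_nodes delta_eq_count_diff[OF N1 N2 U2] by (intro sum.cong) auto
  also have "\<dots> = size (Upsilon N1 - Upsilon N2)"
    using sum_count_diff_over_representatives[OF \<open>finite U1\<close> representatives(1)]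
      representatives(2) by simp
  finally show ?thesis .
qed

theorem proposition3:
  fixes N1 :: "('a, 'l) network" and N2 :: "('b, 'l) network" and S :: "'l set"
    and U1 :: "'a set" and U2 :: "'b set"
  assumes "phylo_net S N1" and "phylo_net S N2"
    and "max_noneq_set N1 U1" and "max_noneq_set N2 U2"
  shows "nakhleh N1 N2 U1 U2 = real (size (msym_diff (Upsilon N1) (Upsilon N2))) / 2"
proof -
  have N1: "finite_dag N1" and N2: "finite_dag N2"
    using assms(1,2) by (simp_all add: phylo_net_finite_dag)
  show ?thesis
    unfolding nakhleh_def msym_diff_def
    using sum_delta_eq_size_diff[OF N1 N2 assms(3,4)] sum_delta_eq_size_diff[OF N2 N1 assms(4,3)]
    by simp
qed

end
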